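(* Let $d$ be a positive integer, let $y_1, \ldots, y_d$ and $C$ be positive real numbers, and define $\pi : \mathbb{Z}^d \to \mathbb{R}$ by $\pi(x_1, \ldots, x_d) = \sum_{i=1}^d x_i y_i$. Let $O^d = \mathbb{Z}_{\ge 0}^d$. Suppose $S \subseteq O^d$ is a finite set such that $\pi(\mathbf{s}) \le C$ for all $\mathbf{s} \in S$, and such that $O^d + (O^d \setminus S) \subseteq O^d \setminus S$, where $A + B = \{a + b : a \in A, b \in B\}$. Then \[ (d+1) \sum_{\mathbf{s} \in S} \bigl(C - \pi(\mathbf{s})\bigr) \ge C\,|S|. \] *)

theory Defs
  imports Main Complex_Main
begin

text \<open>Points of Z^d are represented as functions nat => int vanishing outside {..<d};
 coordinates are indexed 0..d-1.\<close>

definition orth :: "nat \<Rightarrow> (nat \<Rightarrow> int) set" where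
  "orth d = {x. (\<forall>i<d. 0 \<le> x i) \<and> (\<forall>i\<ge>d. x i = 0)}"

definition proj :: "nat \<Rightarrow> (nat \<Rightarrow> real) \<Rightarrow> (nat \<Rightarrow> int) \<Rightarrow> real" where
  "proj d y x = (\<Sum>i<d. real_of_int (x i) * y i)"

definition setplus :: "(nat \<Rightarrow> int) set \<Rightarrow> (nat \<Rightarrow> int) set \<Rightarrow> (nat \<Rightarrow> int) set" where
  "setplus A B = {(\<lambda>i. a i + b i) | a b. a \<in> A \<and> b \<in> B}"

end

theory Submission
  imports Defs
begin

(*
  Write e_i for the i-th unit vector.  The hypothesis on the complement of S
  says exactly that S is a down-set of the orthant O^d.  For a point t of S and a coordinate
  i, consider the "ray" of all j >= 1 with t + j e_i in S.  Since pi(t + j e_i) =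
  pi(t) + j y_i <= C, the ray has at most (C - pi(t)) / y_i elements.  On the other hand,
  because S is a down-set, the pairs (t, j) with j in the ray of t are in bijection with the
  pairs (s, j) with s in S and 1 <= j <= s_i, so the rays in direction i have total length
  sum_{s in S} s_i.  Multiplying by y_i and summing over i gives
      sum_{s in S} pi(s)  <=  d * sum_{t in S} (C - pi(t)),
  and adding sum_{s in S} (C - pi(s)) to both sides yields the theorem.
*)

lemma proj_upd:
  assumes "i < d"
  shows "proj d y (t(i := v)) = proj d y t + real_of_int (v - t i) * y i"
proof -
  have "proj d y (t(i := v))
      = (\<Sum>k<d. real_of_int (t k) * y k + (if k = i then real_of_int (v - t i) * y i else 0))"
    unfolding proj_def by (rule sum.cong) (auto simp: algebra_simps)
  also have "\<dots> = proj d y t + real_of_int (v - t i) * y i"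
    using assms by (simp add: sum.distrib proj_def)
  finally show ?thesis .
qed

definition down_closed :: "nat \<Rightarrow> (nat \<Rightarrow> int) set \<Rightarrow> bool" where
  "down_closed d S \<longleftrightarrow> (\<forall>s\<in>S. \<forall>t\<in>orth d. (\<forall>k. t k \<le> s k) \<longrightarrow> t \<in> S)"

lemma down_closedI_setplus:
  assumes S: "S \<subseteq> orth d" and up: "setplus (orth d) (orth d - S) \<subseteq> orth d - S"
  shows "down_closed d S"
  unfolding down_closed_def
proof (intro ballI impI)
  fix s t assume s: "s \<in> S" and t: "t \<in> orth d" and le: "\<forall>k. t k \<le> s k"
  show "t \<in> S"
  proof (rule ccontr)
    assume "t \<notin> S"
    have "(\<lambda>k. s k - t k) \<in> orth d" using S s t le unfolding orth_def by auto
    hence "(\<lambda>k. (s k - t k) + t k) \<in> setplus (orth d) (orth d - S)"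
      unfolding setplus_def using t \<open>t \<notin> S\<close>
      by (intro CollectI exI[of _ "\<lambda>k. s k - t k"] exI[of _ t]) auto
    hence "s \<in> orth d - S" using up by auto
    thus False using s by simp
  qed
qed

definition ray :: "(nat \<Rightarrow> int) set \<Rightarrow> nat \<Rightarrow> (nat \<Rightarrow> int) \<Rightarrow> nat set" where
  "ray S i t = {j. 1 \<le> j \<and> t(i := t i + int j) \<in> S}"

lemma finite_ray:
  assumes "finite S"
  shows "finite (ray S i t)"
proof -
  let ?shift = "\<lambda>j::nat. t(i := t i + int j)"
  have "inj_on ?shift (ray S i t)"
    by (rule inj_onI) (metis fun_upd_same add_left_cancel of_nat_eq_iff)
  moreover have "?shift ` ray S i t \<subseteq> S" unfolding ray_def by auto
  ultimately show ?thesis using assms by (meson finite_imageD finite_subset)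
qed

text \<open>Every point of a ray still has projection at most C, so a ray from t has length at
  most (C - pi(t)) / y_i.\<close>

lemma ray_length_bound:
  assumes fin: "finite S" and bnd: "\<And>s. s \<in> S \<Longrightarrow> proj d y s \<le> C"
    and i: "i < d" and y: "y i > 0" and t: "t \<in> S"
  shows "y i * real (card (ray S i t)) \<le> C - proj d y t"
proof (cases "ray S i t = {}")
  case True
  then show ?thesis using bnd[OF t] by simp
next
  case False
  define m where "m = Max (ray S i t)"
  have m: "m \<in> ray S i t" using False finite_ray[OF fin] unfolding m_def by simp
  have "ray S i t \<subseteq> {1..m}" using finite_ray[OF fin] unfolding ray_def m_def by auto
  hence "card (ray S i t) \<le> m" using card_mono[of "{1..m}"] by fastforce
  hence "y i * real (card (ray S i t)) \<le> y i * real m" using y by simp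
  also have "\<dots> = proj d y (t(i := t i + int m)) - proj d y t"
    using proj_upd[OF i, of y t] by simp
  also have "\<dots> \<le> C - proj d y t"
    using m bnd unfolding ray_def by simp
  finally show ?thesis .
qed

text \<open>Double counting for a finite down-set: the rays in direction i have total length equal
  to the sum of the i-th coordinates, via the bijection (s, j) \<mapsto> (s - j e_i, j).\<close>

lemma coordinate_sum_eq_ray_lengths:
  assumes S: "S \<subseteq> orth d" and fin: "finite S" and down: "down_closed d S" and i: "i < d"
  shows "(\<Sum>s\<in>S. nat (s i)) = (\<Sum>t\<in>S. card (ray S i t))"
proof -
  let ?lower = "\<lambda>(s, j). (s(i := s i - int j), j)"
  let ?raise = "\<lambda>(t, j). (t(i := t i + int j), j)"
  have lower_maps: "?lower ` (SIGMA s:S. {1..nat (s i)}) \<subseteq> (SIGMA t:S. ray S i t)"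
  proof (rule image_subsetI)
    fix x assume "x \<in> (SIGMA s:S. {1..nat (s i)})"
    then obtain s j where x: "x = (s, j)" and s: "s \<in> S" and j: "j \<in> {1..nat (s i)}"
      by blast
    have "s(i := s i - int j) \<in> orth d" using S s j i unfolding orth_def by auto
    hence "s(i := s i - int j) \<in> S"
      using down s j unfolding down_closed_def by force
    then show "?lower x \<in> (SIGMA t:S. ray S i t)"
      using j s x unfolding ray_def by auto
  qed
  have raise_maps: "?raise ` (SIGMA t:S. ray S i t) \<subseteq> (SIGMA s:S. {1..nat (s i)})"
  proof (rule image_subsetI)
    fix x assume "x \<in> (SIGMA t:S. ray S i t)"
    then obtain t j where x: "x = (t, j)" and t: "t \<in> S" and j: "j \<in> ray S i t" by blast
    have "t i \<ge> 0" using S t i unfolding orth_def by auto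
    then show "?raise x \<in> (SIGMA s:S. {1..nat (s i)})"
      using j x unfolding ray_def by auto
  qed
  have bij: "bij_betw ?lower (SIGMA s:S. {1..nat (s i)}) (SIGMA t:S. ray S i t)"
    by (rule bij_betw_byWitness[where f' = ?raise]) (use lower_maps raise_maps in
        \<open>auto simp: fun_eq_iff\<close>)
  have "(\<Sum>s\<in>S. nat (s i)) = card (SIGMA s:S. {1..nat (s i)})"
    using fin by (simp add: card_SigmaI)
  also have "\<dots> = card (SIGMA t:S. ray S i t)" using bij by (rule bij_betw_same_card)
  also have "\<dots> = (\<Sum>t\<in>S. card (ray S i t))"
    using fin finite_ray[OF fin] by (simp add: card_SigmaI)
  finally show ?thesis .
qed

lemma sum_proj_le_slack:
  assumes S: "S \<subseteq> orth d" and fin: "finite S" and down: "down_closed d S"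
    and y: "\<And>i. i < d \<Longrightarrow> y i > 0" and bnd: "\<And>s. s \<in> S \<Longrightarrow> proj d y s \<le> C"
  shows "(\<Sum>s\<in>S. proj d y s) \<le> real d * (\<Sum>t\<in>S. C - proj d y t)"
proof -
  have coord: "(\<Sum>s\<in>S. real_of_int (s i)) = (\<Sum>t\<in>S. real (card (ray S i t)))"
    if i: "i < d" for i
  proof -
    have "(\<Sum>s\<in>S. real_of_int (s i)) = (\<Sum>s\<in>S. real (nat (s i)))"
      using S i by (intro sum.cong) (auto simp: orth_def)
    also have "\<dots> = real (\<Sum>t\<in>S. card (ray S i t))"
      using coordinate_sum_eq_ray_lengths[OF S fin down i] by (metis of_nat_sum)
    finally show ?thesis by simp
  qed
  have "(\<Sum>s\<in>S. proj d y s) = (\<Sum>i<d. y i * (\<Sum>s\<in>S. real_of_int (s i)))"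
    unfolding proj_def by (simp add: sum.swap[of _ S] sum_distrib_left mult.commute)
  also have "\<dots> = (\<Sum>t\<in>S. \<Sum>i<d. y i * real (card (ray S i t)))"
    using coord by (simp add: sum.swap[of _ S] sum_distrib_left)
  also have "\<dots> \<le> (\<Sum>t\<in>S. \<Sum>i<d. C - proj d y t)"
    by (intro sum_mono) (use ray_length_bound[OF fin bnd] y in auto)
  also have "\<dots> = real d * (\<Sum>t\<in>S. C - proj d y t)"
    by (simp add: sum_distrib_left)
  finally show ?thesis .
qed

theorem lemma3:
  fixes d :: nat and y :: "nat \<Rightarrow> real" and C :: real and S :: "(nat \<Rightarrow> int) set"
  assumes "d \<ge> 1"
    and "\<And>i. i < d \<Longrightarrow> y i > 0"
    and "C > 0"
    and "S \<subseteq> orth d"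
    and "finite S"
    and "\<And>s. s \<in> S \<Longrightarrow> proj d y s \<le> C"
    and "setplus (orth d) (orth d - S) \<subseteq> orth d - S"
  shows "real (d + 1) * (\<Sum>s\<in>S. C - proj d y s) \<ge> C * real (card S)"
proof -
  have down: "down_closed d S" using assms(4,7) by (rule down_closedI_setplus)
  have key: "(\<Sum>s\<in>S. proj d y s) \<le> real d * (\<Sum>s\<in>S. C - proj d y s)"
    using sum_proj_le_slack[OF assms(4,5) down assms(2,6)] .
  have "C * real (card S) = (\<Sum>s\<in>S. proj d y s) + (\<Sum>s\<in>S. C - proj d y s)"
    by (simp add: sum_subtractf mult.commute)
  also have "\<dots> \<le> real (d + 1) * (\<Sum>s\<in>S. C - proj d y s)"
    using key by (simp add: distrib_right)
  finally show ?thesis .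
qed

end
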